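(* For $n\ge 1$, let $\overline{G}_n$ denote the collection of all polyphenylene chains with $n$ hexagons, one for each sequence of attachment choices (ortho/meta/para) at steps $3,\dots,n$ (so $|\overline{G}_n|=3^{\max(n-2,0)}$, counted with multiplicity). Then \[ \mathrm{STN}_{avr}(\overline{G}_n):=\frac{1}{|\overline{G}_n|}\sum_{G\in\overline{G}_n}\mathrm{STN}(G)=\frac{3969}{1444}\Big(\frac{41}{3}\Big)^n+\frac{45}{38}n-\frac{3969}{1444}. \]
   Context: For a graph $G$, $\mathrm{STN}(G)$ is the number of nonempty subtrees of $G$ (subgraphs that are trees, single vertices included). A polyphenylene chain with $n$ hexagons consists of pairwise vertex-disjoint hexagons (6-cycles) $H_1,\dots,H_n$ where for each $i<n$ one vertex of $H_i$ is joined to one vertex of $H_{i+1}$ by a single cut edge, with no other edges. It is built by stepwise addition of terminal hexagons: for $n\le 2$ it is unique, and at each step $i=3,\dots,n$ the new hexagon $H_i$ is attached by a cut edge at a vertex of $H_{i-1}$ at distance $1$ (ortho), $2$ (meta) or $3$ (para) from the vertex of $H_{i-1}$ attached to $H_{i-2}$. *)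

theory Defs
  imports Complex_Main
begin

text \<open>A (finite simple) graph is given by a vertex set V and a set E of edges,
each edge being a 2-element set of vertices.\<close>

definition adj_rel :: "'a set set \<Rightarrow> ('a \<times> 'a) set" where
  "adj_rel E = {(a, b). {a, b} \<in> E}"

definition sg_connected :: "'a set \<Rightarrow> 'a set set \<Rightarrow> bool" where
  "sg_connected V E \<longleftrightarrow> (\<forall>u\<in>V. \<forall>v\<in>V. (u, v) \<in> (adj_rel E)\<^sup>*)"

definition has_cycle :: "'a set set \<Rightarrow> bool" where
  "has_cycle E \<longleftrightarrow> (\<exists>cs. length cs \<ge> 3 \<and> distinct cs \<and>
      (\<forall>i < length cs. {cs ! i, cs ! ((i + 1) mod length cs)} \<in> E))"

definition is_subtree :: "'a set \<Rightarrow> 'a set set \<Rightarrow> 'a set \<Rightarrow> 'a set set \<Rightarrow> bool" where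
  "is_subtree V E V' E' \<longleftrightarrow> V' \<noteq> {} \<and> V' \<subseteq> V \<and> E' \<subseteq> E \<and> (\<forall>e\<in>E'. e \<subseteq> V') \<and>
      sg_connected V' E' \<and> \<not> has_cycle E'"

definition STN :: "'a set \<Rightarrow> 'a set set \<Rightarrow> nat" where
  "STN V E = card {(V', E'). is_subtree V E V' E'}"

text \<open>Hexagon i (0-based, i < n) has vertices (i,0),...,(i,5) forming a 6-cycle.
For i \<ge> 1 the vertex (i,0) is the one attached to hexagon i-1.
The list ds (length n-2, entries in {1,2,3}) encodes the attachment choices:
hexagon i+1 (for i \<ge> 1) is attached at vertex (i, ds!(i-1)) of hexagon i, which is at
distance ds!(i-1) (1 = ortho, 2 = meta, 3 = para) from (i,0).
Hexagon 1 is attached to vertex (0,0) of hexagon 0 (by symmetry, no choice).\<close>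

definition pp_verts :: "nat \<Rightarrow> (nat \<times> nat) set" where
  "pp_verts n = {0..<n} \<times> {0..<6}"

definition hex_edges :: "nat \<Rightarrow> (nat \<times> nat) set set" where
  "hex_edges n = {{(i, j), (i, (j + 1) mod 6)} | i j. i < n \<and> j < 6}"

definition out_vertex :: "nat list \<Rightarrow> nat \<Rightarrow> nat" where
  "out_vertex ds i = (if i = 0 then 0 else ds ! (i - 1))"

definition cut_edges :: "nat \<Rightarrow> nat list \<Rightarrow> (nat \<times> nat) set set" where
  "cut_edges n ds = {{(i, out_vertex ds i), (Suc i, 0)} | i. Suc i < n}"

definition pp_edges :: "nat \<Rightarrow> nat list \<Rightarrow> (nat \<times> nat) set set" where
  "pp_edges n ds = hex_edges n \<union> cut_edges n ds"

definition pp_choices :: "nat \<Rightarrow> nat list set" where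
  "pp_choices n = {ds. length ds = n - 2 \<and> set ds \<subseteq> {1, 2, 3}}"

definition STN_avr :: "nat \<Rightarrow> real" where
  "STN_avr n = (\<Sum>ds\<in>pp_choices n. real (STN (pp_verts n) (pp_edges n ds)))
                / real (card (pp_choices n))"

end

theory Submission
  imports Defs
begin

text \<open>Cutting the edge between the last hexagon and the rest of the chain splits the subtrees of a
  chain with \<open>n + 1\<close> hexagons into subtrees of the shorter chain, subtrees of the new hexagon,
  and unions of a subtree of the shorter chain through the attachment vertex with a subtree of
  the hexagon through its root, joined by the cut edge. A hexagon has 36 subtrees, 21 through a
  given vertex, and 16, 13, 12 through two vertices at distance 1, 2, 3; these are counted by
  deleting the first hexagon edge missing from the subtree, which leaves a path. So if \<open>A\<close> counts
  all subtrees and \<open>B\<close> those through the vertex where the next hexagon is attached, then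
  \<open>A' = A + 36 + 21 B\<close> and \<open>B' = 21 + w B\<close> with \<open>w \<in> {16, 13, 12}\<close> depending on the attachment.
  Summed over all attachment sequences these become linear recurrences with ratio \<open>41 / 3\<close>,
  whose solution is the closed form.\<close>

section \<open>Connectivity and cycles\<close>

lemma adj_rel_iff [simp]: "(x, y) \<in> adj_rel E \<longleftrightarrow> {x, y} \<in> E"
  by (simp add: adj_rel_def)

lemma adj_rel_mono: "E \<subseteq> F \<Longrightarrow> adj_rel E \<subseteq> adj_rel F"
  by (auto simp: adj_rel_def)

lemma sym_rtrancl_adj_rel: "sym ((adj_rel E)\<^sup>*)"
  by (rule sym_rtrancl) (auto intro: symI simp: insert_commute)

lemma has_cycle_mono: "has_cycle E \<Longrightarrow> E \<subseteq> F \<Longrightarrow> has_cycle F"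
  unfolding has_cycle_def by blast

lemma not_has_cycle_empty: "\<not> has_cycle {}"
  unfolding has_cycle_def by force

lemma add_mod_neq_self:
  assumes "a < (L::nat)" "0 < c" "c < L"
  shows "(a + c) mod L \<noteq> a"
  using assms by (cases "a + c < L") (auto simp: mod_if)

lemma cyclic_change_twice:
  fixes f :: "nat \<Rightarrow> bool"
  assumes "i < L" "f i \<noteq> f ((i + 1) mod L)"
  obtains j where "j < L" "j \<noteq> i" "f j \<noteq> f ((j + 1) mod L)"
proof -
  have "\<exists>j<L. j \<noteq> i \<and> f j \<noteq> f ((j + 1) mod L)"
  proof (rule ccontr)
    assume "\<not> ?thesis"
    then have no_other: "f j = f ((j + 1) mod L)" if "j < L" "j \<noteq> i" for j
      using that by blast
    have "f ((i + 1 + k) mod L) = f ((i + 1) mod L)" if "k < L" for k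
      using that
    proof (induction k)
      case (Suc k)
      have "(i + 1 + k) mod L \<noteq> i"
        using add_mod_neq_self[of i L "Suc k"] assms(1) Suc.prems by simp
      then have "f ((i + 1 + k) mod L) = f (((i + 1 + k) mod L + 1) mod L)"
        using no_other assms(1) by simp
      then show ?case
        using Suc by (simp add: mod_Suc_eq)
    qed simp
    from this[of "L - 1"] assms show False
      by simp
  qed
  then show thesis
    using that by blast
qed

lemma cyclic_const:
  fixes f :: "nat \<Rightarrow> bool"
  assumes "\<forall>j<L. f j = f ((j + 1) mod L)" "i < L"
  shows "f i = f 0"
  using assms(2)
proof (induction i)
  case (Suc i)
  then show ?case
    using assms(1)[rule_format, of i] by simp
qed simp

lemma cycle_edge_determines_index:
  assumes "distinct cs" "length cs \<ge> 3" "i < length cs" "j < length cs"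
    and "{cs ! i, cs ! ((i + 1) mod length cs)} = {cs ! j, cs ! ((j + 1) mod length cs)}"
  shows "i = j"
proof (rule ccontr)
  let ?L = "length cs"
  assume "i \<noteq> j"
  then have "cs ! i \<noteq> cs ! j"
    using assms(1,3,4) by (simp add: nth_eq_iff_index_eq)
  then have "cs ! i = cs ! ((j + 1) mod ?L)" "cs ! j = cs ! ((i + 1) mod ?L)"
    using assms(5) by (auto simp: doubleton_eq_iff)
  moreover have "(i + 1) mod ?L < ?L" "(j + 1) mod ?L < ?L"
    using assms(3) by (metis mod_less_divisor not_less0 not_gr0)+
  ultimately have "i = (j + 1) mod ?L" "j = (i + 1) mod ?L"
    using assms(1,3,4) by (simp_all add: nth_eq_iff_index_eq)
  then have "(i + 2) mod ?L = i"
    by (simp add: mod_Suc_eq)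
  then show False
    using add_mod_neq_self[of i ?L 2] assms(2,3) by simp
qed

lemma cycle_avoiding_side:
  assumes E2: "\<forall>e\<in>E2. e \<subseteq> V2" and b: "b \<in> V2"
    and cs: "length cs \<ge> 3" "distinct cs" "set cs \<inter> V2 = {}"
    and edges: "\<forall>i < length cs. {cs ! i, cs ! ((i + 1) mod length cs)} \<in> E1 \<union> E2 \<union> {{a, b}}"
  shows "has_cycle E1"
proof -
  have pos: "0 < length cs"
    using cs(1) by linarith
  have "{cs ! i, cs ! ((i + 1) mod length cs)} \<in> E1" if i: "i < length cs" for i
  proof -
    have "cs ! i \<notin> V2" "cs ! ((i + 1) mod length cs) \<notin> V2"
      using i pos cs(3) by (auto simp: disjoint_iff)
    then have "{cs ! i, cs ! ((i + 1) mod length cs)} \<notin> E2 \<union> {{a, b}}"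
      using E2 b by (auto simp: doubleton_eq_iff)
    then show ?thesis
      using edges i by blast
  qed
  then show ?thesis
    unfolding has_cycle_def using cs(1,2) by blast
qed

text \<open>A cycle could pass between the sides only along the bridge, and it would have to do so at
  least twice, i.e. traverse the bridge twice.\<close>
lemma cycle_on_one_side:
  assumes D: "V1 \<inter> V2 = {}" and E1: "\<forall>e\<in>E1. e \<subseteq> V1" and E2: "\<forall>e\<in>E2. e \<subseteq> V2"
    and cs: "length cs \<ge> 3" "distinct cs"
    and edges: "\<forall>i < length cs. {cs ! i, cs ! ((i + 1) mod length cs)} \<in> E1 \<union> E2 \<union> {{a, b}}"
  shows "set cs \<subseteq> V1 \<or> set cs \<inter> V1 = {}"
proof -
  define L where "L = length cs"
  define side where "side i \<longleftrightarrow> cs ! i \<in> V1" for i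
  have crossing: "{cs ! i, cs ! ((i + 1) mod L)} = {a, b}"
    if "i < L" "side i \<noteq> side ((i + 1) mod L)" for i
  proof -
    have "\<not> {cs ! i, cs ! ((i + 1) mod L)} \<subseteq> V1" "\<not> {cs ! i, cs ! ((i + 1) mod L)} \<subseteq> V2"
      using that(2) D unfolding side_def by auto
    then have "{cs ! i, cs ! ((i + 1) mod L)} \<notin> E1 \<union> E2"
      using E1 E2 by auto
    then show ?thesis
      using edges that(1) unfolding L_def by blast
  qed
  have "\<forall>i<L. side i = side ((i + 1) mod L)"
  proof (intro allI impI)
    fix i assume i: "i < L"
    show "side i = side ((i + 1) mod L)"
    proof (rule ccontr)
      assume change: "side i \<noteq> side ((i + 1) mod L)"
      then obtain j where j: "j < L" "j \<noteq> i" "side j \<noteq> side ((j + 1) mod L)"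
        using cyclic_change_twice[OF i change] by blast
      have "i = j"
        using crossing[OF i change] crossing[OF j(1,3)] cycle_edge_determines_index[OF cs(2,1), of i j]
          i j(1) unfolding L_def by simp
      with j(2) show False by simp
    qed
  qed
  then have "cs ! i \<in> V1 \<longleftrightarrow> cs ! 0 \<in> V1" if "i < L" for i
    using cyclic_const[of L side i] that unfolding side_def by blast
  then show ?thesis
    unfolding L_def by (cases "cs ! 0 \<in> V1") (auto simp: in_set_conv_nth)
qed

lemma has_cycle_bridge:
  assumes D: "V1 \<inter> V2 = {}" and E1: "\<forall>e\<in>E1. e \<subseteq> V1" and E2: "\<forall>e\<in>E2. e \<subseteq> V2"
    and a: "a \<in> V1" and b: "b \<in> V2"
    and cycle: "has_cycle (E1 \<union> E2 \<union> {{a, b}})"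
  shows "has_cycle E1 \<or> has_cycle E2"
proof -
  obtain cs where cs: "length cs \<ge> 3" "distinct cs"
    and edges: "\<forall>i < length cs. {cs ! i, cs ! ((i + 1) mod length cs)} \<in> E1 \<union> E2 \<union> {{a, b}}"
    using cycle unfolding has_cycle_def by blast
  from cycle_on_one_side[OF D E1 E2 cs edges] show ?thesis
  proof
    assume "set cs \<subseteq> V1"
    then have "set cs \<inter> V2 = {}" using D by blast
    then show ?thesis
      using cycle_avoiding_side[OF E2 b cs] edges by blast
  next
    assume "set cs \<inter> V1 = {}"
    moreover have "E1 \<union> E2 \<union> {{a, b}} = E2 \<union> E1 \<union> {{b, a}}"
      by (auto simp: insert_commute)
    ultimately show ?thesis
      using cycle_avoiding_side[OF E1 a cs(1,2)] edges by auto
  qed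
qed

section \<open>Subtrees across a bridge\<close>

lemma rtrancl_adj_rel_disjoint_Un:
  assumes D: "V1 \<inter> V2 = {}" and E1: "\<forall>e\<in>E1. e \<subseteq> V1" and E2: "\<forall>e\<in>E2. e \<subseteq> V2"
    and path: "(u, v) \<in> (adj_rel (E1 \<union> E2))\<^sup>*" and u: "u \<in> V1"
  shows "v \<in> V1 \<and> (u, v) \<in> (adj_rel E1)\<^sup>*"
  using path
proof (induction rule: rtrancl_induct)
  case (step w z)
  then have "{w, z} \<notin> E2"
    using E2 D by blast
  then have "{w, z} \<in> E1"
    using step(2) by simp
  then show ?case
    using step(3) E1 by (auto intro: rtrancl_into_rtrancl)
qed (use u in simp)

lemma rtrancl_adj_rel_bridge:
  assumes D: "V1 \<inter> V2 = {}" and E1: "\<forall>e\<in>E1. e \<subseteq> V1" and E2: "\<forall>e\<in>E2. e \<subseteq> V2"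
    and a: "a \<in> V1" and b: "b \<in> V2"
    and path: "(u, v) \<in> (adj_rel (E1 \<union> E2 \<union> {{a, b}}))\<^sup>*" and u: "u \<in> V1"
  shows "(v \<in> V1 \<longrightarrow> (u, v) \<in> (adj_rel E1)\<^sup>*) \<and>
         (v \<notin> V1 \<longrightarrow> (u, a) \<in> (adj_rel E1)\<^sup>* \<and> (b, v) \<in> (adj_rel E2)\<^sup>*)"
  using path
proof (induction rule: rtrancl_induct)
  case (step w z)
  have e: "{w, z} \<in> E1 \<union> E2 \<union> {{a, b}}"
    using step(2) by simp
  show ?case
  proof (cases "w \<in> V1")
    case True
    then have IH: "(u, w) \<in> (adj_rel E1)\<^sup>*"
      using step(3) by blast
    have "{w, z} \<notin> E2"
      using E2 D True by blast
    then consider "{w, z} \<in> E1" | "w = a" "z = b"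
      using e True b D by (auto simp: doubleton_eq_iff)
    then show ?thesis
    proof cases
      case 1
      then show ?thesis
        using IH E1 by (auto intro: rtrancl_into_rtrancl)
    qed (use IH b D in blast)
  next
    case False
    then have IH: "(u, a) \<in> (adj_rel E1)\<^sup>*" "(b, w) \<in> (adj_rel E2)\<^sup>*"
      using step(3) by blast+
    have "{w, z} \<notin> E1"
      using E1 False by blast
    then consider "{w, z} \<in> E2" | "w = b" "z = a"
      using e False a by (auto simp: doubleton_eq_iff)
    then show ?thesis
    proof cases
      case 1
      then have "z \<notin> V1"
        using E2 D by blast
      then show ?thesis
        using IH 1 by (auto intro: rtrancl_into_rtrancl)
    qed (use IH a in blast)
  qed
qed (use u in simp)

lemma sg_connected_bridge_side:
  assumes D: "V1 \<inter> V2 = {}" and E1: "\<forall>e\<in>E1. e \<subseteq> V1" and E2: "\<forall>e\<in>E2. e \<subseteq> V2"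
    and a: "a \<in> V1" and b: "b \<in> V2" and con: "sg_connected U (E1 \<union> E2 \<union> {{a, b}})"
  shows "sg_connected (U \<inter> V1) E1"
  unfolding sg_connected_def
proof (intro ballI)
  fix u v assume uv: "u \<in> U \<inter> V1" "v \<in> U \<inter> V1"
  then have "(u, v) \<in> (adj_rel (E1 \<union> E2 \<union> {{a, b}}))\<^sup>*"
    using con unfolding sg_connected_def by blast
  then show "(u, v) \<in> (adj_rel E1)\<^sup>*"
    using rtrancl_adj_rel_bridge[OF D E1 E2 a b] uv by blast
qed

lemma sg_connected_join:
  assumes con1: "sg_connected V1 E1" and con2: "sg_connected V2 E2" and a: "a \<in> V1" and b: "b \<in> V2"
  shows "sg_connected (V1 \<union> V2) (E1 \<union> E2 \<union> {{a, b}})"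
proof -
  define F where "F = E1 \<union> E2 \<union> {{a, b}}"
  let ?R = "(adj_rel F)\<^sup>*"
  have r1: "(u, v) \<in> ?R" if "u \<in> V1" "v \<in> V1" for u v
    using con1 that rtrancl_mono[OF adj_rel_mono[of E1 F]] unfolding sg_connected_def F_def by blast
  have r2: "(u, v) \<in> ?R" if "u \<in> V2" "v \<in> V2" for u v
    using con2 that rtrancl_mono[OF adj_rel_mono[of E2 F]] unfolding sg_connected_def F_def by blast
  have "(a, b) \<in> ?R"
    unfolding F_def by auto
  then have ba: "(b, a) \<in> ?R"
    by (rule symD[OF sym_rtrancl_adj_rel])
  have to_a: "(u, a) \<in> ?R" if "u \<in> V1 \<union> V2" for u
  proof (cases "u \<in> V1")
    case False
    then have "(u, b) \<in> ?R"
      using that r2[OF _ b] by blast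
    then show ?thesis
      using ba by (rule rtrancl_trans)
  qed (use r1[OF _ a] in blast)
  have "(u, v) \<in> ?R" if "u \<in> V1 \<union> V2" "v \<in> V1 \<union> V2" for u v
    using to_a[OF that(1)] symD[OF sym_rtrancl_adj_rel to_a[OF that(2)]] by (rule rtrancl_trans)
  then show ?thesis
    unfolding sg_connected_def F_def by blast
qed

lemma is_subtree_host:
  "is_subtree V E V' E' \<Longrightarrow> V' \<subseteq> U \<Longrightarrow> E' \<subseteq> F \<Longrightarrow> is_subtree U F V' E'"
  unfolding is_subtree_def by blast

lemma is_subtree_supergraph:
  "is_subtree V E V' E' \<Longrightarrow> V \<subseteq> U \<Longrightarrow> E \<subseteq> F \<Longrightarrow> is_subtree U F V' E'"
  unfolding is_subtree_def by blast

lemma is_subtree_disjoint_Un_side: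
  assumes D: "V1 \<inter> V2 = {}" and E1: "\<forall>e\<in>E1. e \<subseteq> V1" and E2: "\<forall>e\<in>E2. e \<subseteq> V2"
    and nonempty: "{} \<notin> E2"
    and T: "is_subtree U F V' E'" and E': "E' \<subseteq> E1 \<union> E2" and u: "u \<in> V'" "u \<in> V1"
  shows "is_subtree V1 E1 V' E'"
proof -
  have sub: "\<forall>e\<in>E'. e \<subseteq> V'" and con: "sg_connected V' E'"
    using T unfolding is_subtree_def by auto
  have "(u, v) \<in> (adj_rel (E' \<inter> E1 \<union> E' \<inter> E2))\<^sup>*" if "v \<in> V'" for v
  proof -
    have "E' = E' \<inter> E1 \<union> E' \<inter> E2"
      using E' by blast
    then show ?thesis
      using con u that unfolding sg_connected_def by metis
  qed
  then have V': "V' \<subseteq> V1"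
    using rtrancl_adj_rel_disjoint_Un[OF D _ _ _ u(2), of "E' \<inter> E1" "E' \<inter> E2"] E1 E2 by blast
  have "E' \<subseteq> E1"
  proof
    fix e assume e: "e \<in> E'"
    show "e \<in> E1"
    proof (rule ccontr)
      assume "e \<notin> E1"
      then have "e \<subseteq> V2" "e \<noteq> {}"
        using e E' E2 nonempty by auto
      moreover have "e \<subseteq> V1"
        using V' sub e by blast
      ultimately show False
        using D by blast
    qed
  qed
  then show ?thesis
    using T V' unfolding is_subtree_def by blast
qed

locale bridged_graphs =
  fixes V1 V2 :: "'a set" and E1 E2 :: "'a set set" and a b :: 'a
  assumes disjoint: "V1 \<inter> V2 = {}"
    and edges1: "\<forall>e\<in>E1. e \<subseteq> V1" and edges2: "\<forall>e\<in>E2. e \<subseteq> V2"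
    and a: "a \<in> V1" and b: "b \<in> V2"
    and nonempty1: "{} \<notin> E1" and nonempty2: "{} \<notin> E2"
begin

abbreviation "V \<equiv> V1 \<union> V2"
abbreviation "E \<equiv> E1 \<union> E2 \<union> {{a, b}}"

lemma subtree_split:
  assumes T: "is_subtree V E V' E'" and ab: "{a, b} \<in> E'"
  shows "is_subtree V1 E1 (V' \<inter> V1) (E' \<inter> E1)" "is_subtree V2 E2 (V' \<inter> V2) (E' \<inter> E2)"
    and "a \<in> V'" "b \<in> V'"
proof -
  have sub: "E' \<subseteq> E" "\<forall>e\<in>E'. e \<subseteq> V'" and con: "sg_connected V' E'" and acyc: "\<not> has_cycle E'"
    using T unfolding is_subtree_def by auto
  show av: "a \<in> V'" and bv: "b \<in> V'"
    using sub(2) ab by auto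
  have E1': "\<forall>e\<in>E' \<inter> E1. e \<subseteq> V1" and E2': "\<forall>e\<in>E' \<inter> E2. e \<subseteq> V2"
    using edges1 edges2 by blast+
  have split_edges: "E' \<inter> E1 \<union> E' \<inter> E2 \<union> {{a, b}} = E'" "E' \<inter> E2 \<union> E' \<inter> E1 \<union> {{b, a}} = E'"
    using sub(1) ab by (auto simp: insert_commute)
  have "sg_connected V' (E' \<inter> E1 \<union> E' \<inter> E2 \<union> {{a, b}})"
    unfolding split_edges(1) by (rule con)
  then have con1: "sg_connected (V' \<inter> V1) (E' \<inter> E1)"
    by (rule sg_connected_bridge_side[OF disjoint E1' E2' a b])
  have "V2 \<inter> V1 = {}"
    using disjoint by blast
  moreover have "sg_connected V' (E' \<inter> E2 \<union> E' \<inter> E1 \<union> {{b, a}})"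
    unfolding split_edges(2) by (rule con)
  ultimately have con2: "sg_connected (V' \<inter> V2) (E' \<inter> E2)"
    by (rule sg_connected_bridge_side[OF _ E2' E1' b a])
  have acyc12: "\<not> has_cycle (E' \<inter> E1)" "\<not> has_cycle (E' \<inter> E2)"
    using acyc has_cycle_mono by blast+
  have sub12: "\<forall>e\<in>E' \<inter> E1. e \<subseteq> V' \<inter> V1" "\<forall>e\<in>E' \<inter> E2. e \<subseteq> V' \<inter> V2"
    using sub(2) E1' E2' by blast+
  show "is_subtree V1 E1 (V' \<inter> V1) (E' \<inter> E1)" "is_subtree V2 E2 (V' \<inter> V2) (E' \<inter> E2)"
    unfolding is_subtree_def using con1 con2 acyc12 sub12 av bv a b by blast+
qed

lemma subtree_avoiding_bridge:
  assumes T: "is_subtree V E V' E'" and ab: "{a, b} \<notin> E'"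
  shows "is_subtree V1 E1 V' E' \<or> is_subtree V2 E2 V' E'"
proof -
  have sub: "V' \<subseteq> V" "E' \<subseteq> E1 \<union> E2" "V' \<noteq> {}"
    using T ab unfolding is_subtree_def by auto
  then obtain u where u: "u \<in> V'" "u \<in> V1 \<or> u \<in> V2"
    by blast
  have "V2 \<inter> V1 = {}" "E' \<subseteq> E2 \<union> E1"
    using disjoint sub(2) by blast+
  then show ?thesis
    using u is_subtree_disjoint_Un_side[OF disjoint edges1 edges2 nonempty2 T sub(2) u(1)]
      is_subtree_disjoint_Un_side[OF _ edges2 edges1 nonempty1 T _ u(1)] by blast
qed

lemma subtree_join:
  assumes T1: "is_subtree V1 E1 V1' E1'" and T2: "is_subtree V2 E2 V2' E2'"
    and av: "a \<in> V1'" and bv: "b \<in> V2'"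
  shows "is_subtree V E (V1' \<union> V2') (E1' \<union> E2' \<union> {{a, b}})"
proof -
  have s1: "V1' \<subseteq> V1" "E1' \<subseteq> E1" "\<forall>e\<in>E1'. e \<subseteq> V1'" "sg_connected V1' E1'" "\<not> has_cycle E1'"
    using T1 unfolding is_subtree_def by auto
  have s2: "V2' \<subseteq> V2" "E2' \<subseteq> E2" "\<forall>e\<in>E2'. e \<subseteq> V2'" "sg_connected V2' E2'" "\<not> has_cycle E2'"
    using T2 unfolding is_subtree_def by auto
  have "V1' \<inter> V2' = {}"
    using disjoint s1(1) s2(1) by blast
  then have "\<not> has_cycle (E1' \<union> E2' \<union> {{a, b}})"
    using has_cycle_bridge[OF _ s1(3) s2(3) av bv] s1(5) s2(5) by blast
  moreover have "sg_connected (V1' \<union> V2') (E1' \<union> E2' \<union> {{a, b}})"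
    using s1(4) s2(4) av bv by (rule sg_connected_join)
  moreover have "\<forall>e\<in>E1' \<union> E2' \<union> {{a, b}}. e \<subseteq> V1' \<union> V2'"
    using s1(3) s2(3) av bv by blast
  moreover have "V1' \<union> V2' \<subseteq> V" "E1' \<union> E2' \<union> {{a, b}} \<subseteq> E"
    using s1(1,2) s2(1,2) by blast+
  ultimately show ?thesis
    unfolding is_subtree_def using av by blast
qed

end

definition subtrees_containing :: "'a set \<Rightarrow> 'a set set \<Rightarrow> 'a set \<Rightarrow> ('a set \<times> 'a set set) set" where
  "subtrees_containing V E W = {(V', E'). is_subtree V E V' E' \<and> W \<subseteq> V'}"

definition STN_containing :: "'a set \<Rightarrow> 'a set set \<Rightarrow> 'a set \<Rightarrow> nat" where
  "STN_containing V E W = card (subtrees_containing V E W)"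

lemma STN_eq_STN_containing: "STN V E = STN_containing V E {}"
  unfolding STN_def STN_containing_def subtrees_containing_def by simp

lemma finite_subtrees_containing:
  assumes "finite V" "finite E"
  shows "finite (subtrees_containing V E W)"
proof (rule finite_subset)
  show "subtrees_containing V E W \<subseteq> Pow V \<times> Pow E"
    unfolding subtrees_containing_def is_subtree_def by auto
qed (use assms in simp)

lemma STN_containing_eq_0:
  assumes "\<not> W \<subseteq> V"
  shows "STN_containing V E W = 0"
proof -
  have "subtrees_containing V E W = {}"
    using assms unfolding subtrees_containing_def is_subtree_def by auto
  then show ?thesis
    unfolding STN_containing_def by simp
qed

definition bridge_join ::
  "'a \<Rightarrow> 'a \<Rightarrow> ('a set \<times> 'a set set) \<times> ('a set \<times> 'a set set) \<Rightarrow> 'a set \<times> 'a set set" where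
  "bridge_join a b = (\<lambda>((V1', E1'), (V2', E2')). (V1' \<union> V2', E1' \<union> E2' \<union> {{a, b}}))"

context bridged_graphs
begin

lemma subtrees_containing_sides_subset:
  "subtrees_containing V1 E1 W \<union> subtrees_containing V2 E2 W \<subseteq> subtrees_containing V E W"
proof
  fix T assume "T \<in> subtrees_containing V1 E1 W \<union> subtrees_containing V2 E2 W"
  then obtain V' E' where T: "T = (V', E')" "W \<subseteq> V'"
    and side: "is_subtree V1 E1 V' E' \<or> is_subtree V2 E2 V' E'"
    unfolding subtrees_containing_def by auto
  have "is_subtree V E V' E'"
    using side is_subtree_supergraph[of V1 E1 V' E' V E] is_subtree_supergraph[of V2 E2 V' E' V E]
    by blast
  with T show "T \<in> subtrees_containing V E W"
    unfolding subtrees_containing_def by simp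
qed

lemma bridge_join_in_subtrees_containing:
  assumes "p \<in> subtrees_containing V1 E1 (insert a (W - V2)) \<times> subtrees_containing V2 E2 (insert b (W - V1))"
  shows "bridge_join a b p \<in> subtrees_containing V E W"
proof -
  obtain V1' E1' V2' E2' where p: "p = ((V1', E1'), (V2', E2'))"
    by (metis surj_pair)
  then have T1: "is_subtree V1 E1 V1' E1'" "insert a (W - V2) \<subseteq> V1'"
    and T2: "is_subtree V2 E2 V2' E2'" "insert b (W - V1) \<subseteq> V2'"
    using assms unfolding subtrees_containing_def by auto
  moreover have "W \<subseteq> V1' \<union> V2'"
    using T1(2) T2(2) disjoint by blast
  ultimately show ?thesis
    using subtree_join[OF T1(1) T2(1)] unfolding p bridge_join_def subtrees_containing_def by auto
qed

lemma subtrees_containing_bridge: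
  "subtrees_containing V E W =
     subtrees_containing V1 E1 W \<union> subtrees_containing V2 E2 W \<union>
     bridge_join a b ` (subtrees_containing V1 E1 (insert a (W - V2)) \<times>
                        subtrees_containing V2 E2 (insert b (W - V1)))"
    (is "?S = ?S1 \<union> ?S2 \<union> bridge_join a b ` (?X \<times> ?Y)")
proof (intro equalityI subsetI)
  fix T assume "T \<in> ?S"
  then obtain V' E' where T: "T = (V', E')" "is_subtree V E V' E'" "W \<subseteq> V'"
    unfolding subtrees_containing_def by auto
  have sub: "V' \<subseteq> V" "E' \<subseteq> E"
    using T(2) unfolding is_subtree_def by auto
  show "T \<in> ?S1 \<union> ?S2 \<union> bridge_join a b ` (?X \<times> ?Y)"
  proof (cases "{a, b} \<in> E'")
    case True
    note split = subtree_split[OF T(2) True]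
    have "((V' \<inter> V1, E' \<inter> E1), (V' \<inter> V2, E' \<inter> E2)) \<in> ?X \<times> ?Y"
      using split T(3) sub(1) a b unfolding subtrees_containing_def by auto
    moreover have "T = bridge_join a b ((V' \<inter> V1, E' \<inter> E1), (V' \<inter> V2, E' \<inter> E2))"
      using T(1) sub True unfolding bridge_join_def by auto
    ultimately show ?thesis
      by blast
  next
    case False
    then show ?thesis
      using subtree_avoiding_bridge[OF T(2)] T unfolding subtrees_containing_def by auto
  qed
qed (use subtrees_containing_sides_subset bridge_join_in_subtrees_containing in blast)

end

context bridged_graphs
begin

lemma disjoint_edges: "E1 \<inter> E2 = {}"
proof -
  have "e \<notin> E2" if "e \<in> E1" for e
  proof -
    have "e \<subseteq> V1" "e \<noteq> {}"
      using that edges1 nonempty1 by auto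
    then obtain x where "x \<in> e" "x \<in> V1"
      by blast
    then show ?thesis
      using edges2 disjoint by blast
  qed
  then show ?thesis
    by blast
qed

lemma bridge_notin_edges: "{a, b} \<notin> E1" "{a, b} \<notin> E2"
  using edges1 edges2 a b disjoint by blast+

lemma bridge_join_inverse:
  assumes "p \<in> subtrees_containing V1 E1 X \<times> subtrees_containing V2 E2 Y"
  shows "(\<lambda>(V', E'). ((V' \<inter> V1, E' \<inter> E1), (V' \<inter> V2, E' \<inter> E2))) (bridge_join a b p) = p"
proof -
  obtain V1' E1' V2' E2' where p: "p = ((V1', E1'), (V2', E2'))"
    by (metis surj_pair)
  then have "V1' \<subseteq> V1" "E1' \<subseteq> E1" "V2' \<subseteq> V2" "E2' \<subseteq> E2"
    using assms unfolding subtrees_containing_def is_subtree_def by auto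
  then show ?thesis
    unfolding p bridge_join_def using disjoint disjoint_edges bridge_notin_edges by auto
qed

lemma inj_on_bridge_join:
  "inj_on (bridge_join a b) (subtrees_containing V1 E1 X \<times> subtrees_containing V2 E2 Y)"
  by (rule inj_on_inverseI[where g = "\<lambda>(V', E'). ((V' \<inter> V1, E' \<inter> E1), (V' \<inter> V2, E' \<inter> E2))",
        OF bridge_join_inverse])

lemma STN_containing_bridge:
  assumes "finite V1" "finite V2" "finite E1" "finite E2"
  shows "STN_containing V E W =
    STN_containing V1 E1 W + STN_containing V2 E2 W +
    STN_containing V1 E1 (insert a (W - V2)) * STN_containing V2 E2 (insert b (W - V1))"
proof -
  let ?S1 = "subtrees_containing V1 E1 W" and ?S2 = "subtrees_containing V2 E2 W"
  let ?X = "subtrees_containing V1 E1 (insert a (W - V2))"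
  let ?Y = "subtrees_containing V2 E2 (insert b (W - V1))"
  let ?J = "bridge_join a b ` (?X \<times> ?Y)"
  have fin: "finite ?S1" "finite ?S2" "finite ?X" "finite ?Y"
    using assms by (simp_all add: finite_subtrees_containing)
  have "?S1 \<inter> ?S2 = {}"
  proof (rule equals0I)
    fix T assume "T \<in> ?S1 \<inter> ?S2"
    then have "fst T \<subseteq> V1" "fst T \<subseteq> V2" "fst T \<noteq> {}"
      unfolding subtrees_containing_def is_subtree_def by auto
    then show False
      using disjoint by blast
  qed
  moreover have "(?S1 \<union> ?S2) \<inter> ?J = {}"
  proof (rule equals0I)
    fix T assume T: "T \<in> (?S1 \<union> ?S2) \<inter> ?J"
    then have "a \<in> fst T" "b \<in> fst T"
      unfolding subtrees_containing_def bridge_join_def by auto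
    moreover have "fst T \<subseteq> V1 \<or> fst T \<subseteq> V2"
      using T unfolding subtrees_containing_def is_subtree_def by auto
    ultimately show False
      using a b disjoint by blast
  qed
  moreover have "card ?J = card ?X * card ?Y"
    using card_image[OF inj_on_bridge_join] by (simp add: card_cartesian_product)
  ultimately show ?thesis
    unfolding STN_containing_def subtrees_containing_bridge
    using fin by (simp add: card_Un_disjoint)
qed

end

section \<open>Paths\<close>

fun path_edges :: "'a list \<Rightarrow> 'a set set" where
  "path_edges [] = {}"
| "path_edges [x] = {}"
| "path_edges (x # y # zs) = insert {x, y} (path_edges (y # zs))"

lemma path_edges_subset: "e \<in> path_edges vs \<Longrightarrow> e \<subseteq> set vs"
  by (induction vs rule: path_edges.induct) auto

lemma empty_notin_path_edges: "{} \<notin> path_edges vs"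
  by (induction vs rule: path_edges.induct) auto

lemma finite_path_edges: "finite (path_edges vs)"
  by (induction vs rule: path_edges.induct) auto

lemma path_edges_append:
  "xs \<noteq> [] \<Longrightarrow> ys \<noteq> [] \<Longrightarrow>
    path_edges (xs @ ys) = path_edges xs \<union> path_edges ys \<union> {{last xs, hd ys}}"
proof (induction xs rule: path_edges.induct)
  case (2 x)
  then show ?case
    by (cases ys) auto
qed auto

lemma path_edges_split:
  "e \<in> path_edges vs \<Longrightarrow> \<exists>xs ys. vs = xs @ ys \<and> xs \<noteq> [] \<and> ys \<noteq> [] \<and> e = {last xs, hd ys}"
proof (induction vs rule: path_edges.induct)
  case (3 x y zs)
  show ?case
  proof (cases "e = {x, y}")
    case True
    then show ?thesis
      by (intro exI[of _ "[x]"] exI[of _ "y # zs"]) simp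
  next
    case False
    then obtain xs ys where "y # zs = xs @ ys" "xs \<noteq> []" "ys \<noteq> []" "e = {last xs, hd ys}"
      using 3 by auto
    then show ?thesis
      by (intro exI[of _ "x # xs"] exI[of _ ys]) simp
  qed
qed auto

lemma path_bridged_graphs:
  assumes "distinct (xs @ ys)" "xs \<noteq> []" "ys \<noteq> []"
  shows "bridged_graphs (set xs) (set ys) (path_edges xs) (path_edges ys) (last xs) (hd ys)"
proof unfold_locales
  show "\<forall>e\<in>path_edges xs. e \<subseteq> set xs" "\<forall>e\<in>path_edges ys. e \<subseteq> set ys"
    using path_edges_subset by blast+
qed (use assms empty_notin_path_edges in auto)

lemma subtree_of_path_contains_edge:
  assumes "distinct vs" and e: "{u, w} \<in> path_edges vs"
    and T: "is_subtree (set vs) (path_edges vs) V' E'" and "u \<in> V'" "w \<in> V'"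
  shows "{u, w} \<in> E'"
proof (rule ccontr)
  assume not_in: "{u, w} \<notin> E'"
  obtain xs ys where split: "vs = xs @ ys" "xs \<noteq> []" "ys \<noteq> []" and uw: "{u, w} = {last xs, hd ys}"
    using path_edges_split[OF e] by blast
  interpret bridged_graphs "set xs" "set ys" "path_edges xs" "path_edges ys" "last xs" "hd ys"
    using path_bridged_graphs assms(1) split by blast
  have "is_subtree V E V' E'"
    using T unfolding split(1) path_edges_append[OF split(2,3)] by simp
  then have "is_subtree (set xs) (path_edges xs) V' E' \<or> is_subtree (set ys) (path_edges ys) V' E'"
    using subtree_avoiding_bridge not_in uw by simp
  then have "V' \<subseteq> set xs \<or> V' \<subseteq> set ys"
    unfolding is_subtree_def by blast
  moreover have "last xs \<in> V'" "hd ys \<in> V'"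
    using uw assms(4,5) by (auto simp: doubleton_eq_iff)
  ultimately show False
    using a b disjoint by blast
qed

lemma is_subtree_singleton_iff: "is_subtree {x} {} V' E' \<longleftrightarrow> V' = {x} \<and> E' = {}"
  unfolding is_subtree_def sg_connected_def using not_has_cycle_empty by auto

lemma STN_containing_singleton: "STN_containing {x} {} W = (if W \<subseteq> {x} then 1 else 0)"
proof -
  have "subtrees_containing {x} {} W = (if W \<subseteq> {x} then {({x}, {})} else {})"
    unfolding subtrees_containing_def is_subtree_singleton_iff by auto
  then show ?thesis
    unfolding STN_containing_def by simp
qed

definition path_STN :: "'a list \<Rightarrow> 'a set \<Rightarrow> nat" where
  "path_STN vs W = STN_containing (set vs) (path_edges vs) W"

lemma path_STN_singleton: "path_STN [x] W = (if W \<subseteq> {x} then 1 else 0)"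
  unfolding path_STN_def by (simp add: STN_containing_singleton)

lemma path_STN_Cons:
  assumes "distinct (x # y # zs)"
  shows "path_STN (x # y # zs) W =
    (if W \<subseteq> {x} then 1 else 0) + path_STN (y # zs) W +
    (if insert x (W - set (y # zs)) \<subseteq> {x} then 1 else 0) * path_STN (y # zs) (insert y (W - {x}))"
proof -
  interpret bridged_graphs "{x}" "set (y # zs)" "{}" "path_edges (y # zs)" x y
  proof unfold_locales
    show "\<forall>e\<in>path_edges (y # zs). e \<subseteq> set (y # zs)"
      using path_edges_subset by blast
  qed (use assms empty_notin_path_edges in auto)
  have "set (x # y # zs) = V" "path_edges (x # y # zs) = E"
    by auto
  then show ?thesis
    unfolding path_STN_def
    by (simp only: STN_containing_bridge finite_path_edges STN_containing_singleton
        finite.emptyI finite_insert List.finite_set)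
qed

section \<open>Hexagons\<close>

definition hexagon_verts :: "nat \<Rightarrow> (nat \<times> nat) set" where
  "hexagon_verts i = {i} \<times> {0..<6}"

definition hexagon_edge :: "nat \<Rightarrow> nat \<Rightarrow> (nat \<times> nat) set" where
  "hexagon_edge i j = {(i, j), (i, (j + 1) mod 6)}"

definition hexagon_edges :: "nat \<Rightarrow> (nat \<times> nat) set set" where
  "hexagon_edges i = hexagon_edge i ` {0..<6}"

text \<open>Hexagon \<open>i\<close> with its edge \<open>k\<close> deleted, read as a path starting at the far end of that edge.\<close>
definition hexagon_path :: "nat \<Rightarrow> nat \<Rightarrow> (nat \<times> nat) list" where
  "hexagon_path i k = map (\<lambda>j. (i, (k + 1 + j) mod 6)) [0..<6]"

text \<open>The vertices covered by the hexagon edges \<open>0, \<dots>, k - 1\<close>.\<close>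
definition arc_verts :: "nat \<Rightarrow> nat \<Rightarrow> (nat \<times> nat) set" where
  "arc_verts i k = (if k = 0 then {} else {i} \<times> {0..k})"

lemma less_6_cases: "(k::nat) < 6 \<Longrightarrow> k = 0 \<or> k = 1 \<or> k = 2 \<or> k = 3 \<or> k = 4 \<or> k = 5"
  by arith

lemma inj_on_hexagon_edge: "inj_on (hexagon_edge i) {0..<6}"
proof (rule inj_onI)
  fix j k assume "j \<in> {0..<6}" "k \<in> {0..<6}" "hexagon_edge i j = hexagon_edge i k"
  then show "j = k"
    unfolding hexagon_edge_def using less_6_cases[of j] less_6_cases[of k]
    by (auto simp: doubleton_eq_iff numeral_2_eq_2[symmetric])
qed

lemma set_hexagon_path: "k < 6 \<Longrightarrow> set (hexagon_path i k) = hexagon_verts i"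
  unfolding hexagon_path_def hexagon_verts_def
  by (drule less_6_cases) (auto simp: upt_rec less_Suc_eq)

lemma distinct_hexagon_path: "k < 6 \<Longrightarrow> distinct (hexagon_path i k)"
  unfolding hexagon_path_def by (drule less_6_cases) (auto simp: upt_rec)

lemma path_edges_hexagon_path:
  assumes k: "k < 6"
  shows "path_edges (hexagon_path i k) = hexagon_edges i - {hexagon_edge i k}"
proof -
  have "path_edges (hexagon_path i k) = hexagon_edge i ` set (map (\<lambda>j. (k + 1 + j) mod 6) [0..<5])"
    unfolding hexagon_path_def using less_6_cases[OF k]
    by (elim disjE) (simp_all add: upt_rec hexagon_edge_def numeral_2_eq_2[symmetric])
  also have "set (map (\<lambda>j. (k + 1 + j) mod 6) [0..<5]) = {0..<6} - {k}"
    using less_6_cases[OF k] by (elim disjE) (auto simp: upt_rec)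
  also have "hexagon_edge i ` ({0..<6} - {k}) = hexagon_edges i - {hexagon_edge i k}"
    unfolding hexagon_edges_def using k by (subst inj_on_image_set_diff[OF inj_on_hexagon_edge]) auto
  finally show ?thesis .
qed

lemma hexagon_subtree_misses_edge:
  assumes "is_subtree (hexagon_verts i) (hexagon_edges i) V' E'"
  obtains k where "k < 6" "hexagon_edge i k \<notin> E'"
proof -
  have "\<exists>k<6. hexagon_edge i k \<notin> E'"
  proof (rule ccontr)
    assume "\<not> ?thesis"
    then have all: "hexagon_edge i k \<in> E'" if "k < 6" for k
      using that by blast
    define cs where "cs = map (Pair i) [0..<6]"
    have "length cs = 6" "distinct cs"
      unfolding cs_def by (simp_all add: distinct_map inj_on_def)
    moreover have "{cs ! m, cs ! ((m + 1) mod 6)} \<in> E'" if "m < 6" for m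
      using all[OF that] that unfolding cs_def hexagon_edge_def by simp
    ultimately have "has_cycle E'"
      unfolding has_cycle_def by (intro exI[of _ cs]) simp
    then show False
      using assms unfolding is_subtree_def by blast
  qed
  then show thesis
    using that by blast
qed

lemma hexagon_edge_below_in_arc:
  assumes "j < k" "k < 6"
  shows "hexagon_edge i j \<subseteq> arc_verts i k"
  using assms unfolding hexagon_edge_def arc_verts_def by auto

lemma arc_verts_covered:
  assumes "k < 6" "x \<in> arc_verts i k"
  obtains j where "j < k" "x \<in> hexagon_edge i j"
proof -
  obtain m where x: "x = (i, m)" "m \<le> k" "0 < k"
    using assms(2) unfolding arc_verts_def by (auto split: if_splits)
  show thesis
  proof (cases m)
    case 0
    then show thesis
      using that[of 0] x unfolding hexagon_edge_def by simp
  next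
    case (Suc j)
    then show thesis
      using that[of j] x assms(1) unfolding hexagon_edge_def by simp
  qed
qed

lemma hexagon_subtree_to_path:
  assumes k: "k < 6" and T: "is_subtree (hexagon_verts i) (hexagon_edges i) V' E'"
    and missing: "hexagon_edge i k \<notin> E'" and below: "\<forall>j<k. hexagon_edge i j \<in> E'"
  shows "is_subtree (set (hexagon_path i k)) (path_edges (hexagon_path i k)) V' E'"
    and "arc_verts i k \<subseteq> V'"
proof -
  have sub: "V' \<subseteq> hexagon_verts i" "E' \<subseteq> hexagon_edges i" "\<forall>e\<in>E'. e \<subseteq> V'"
    using T unfolding is_subtree_def by auto
  show "is_subtree (set (hexagon_path i k)) (path_edges (hexagon_path i k)) V' E'"
    using T sub missing
    by (auto intro: is_subtree_host simp: set_hexagon_path[OF k] path_edges_hexagon_path[OF k])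
  show "arc_verts i k \<subseteq> V'"
  proof
    fix x assume "x \<in> arc_verts i k"
    then obtain j where "j < k" "x \<in> hexagon_edge i j"
      using arc_verts_covered k by blast
    then show "x \<in> V'"
      using below sub(3) by blast
  qed
qed

lemma path_subtree_to_hexagon:
  assumes k: "k < 6" and T: "is_subtree (set (hexagon_path i k)) (path_edges (hexagon_path i k)) V' E'"
    and arc: "arc_verts i k \<subseteq> V'"
  shows "is_subtree (hexagon_verts i) (hexagon_edges i) V' E'"
    and "hexagon_edge i k \<notin> E'" and "\<forall>j<k. hexagon_edge i j \<in> E'"
proof -
  have E': "E' \<subseteq> hexagon_edges i - {hexagon_edge i k}"
    using T unfolding is_subtree_def path_edges_hexagon_path[OF k] by auto
  show "is_subtree (hexagon_verts i) (hexagon_edges i) V' E'"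
    using T by (rule is_subtree_supergraph) (auto simp: set_hexagon_path[OF k] path_edges_hexagon_path[OF k])
  show "hexagon_edge i k \<notin> E'"
    using E' by blast
  show "\<forall>j<k. hexagon_edge i j \<in> E'"
  proof (intro allI impI)
    fix j assume j: "j < k"
    have "hexagon_edge i j \<noteq> hexagon_edge i k"
      using inj_onD[OF inj_on_hexagon_edge, of i j k] j k by auto
    then have "{(i, j), (i, (j + 1) mod 6)} \<in> path_edges (hexagon_path i k)"
      unfolding path_edges_hexagon_path[OF k] hexagon_edges_def using j k
      by (auto simp: hexagon_edge_def)
    moreover have "(i, j) \<in> V'" "(i, (j + 1) mod 6) \<in> V'"
      using hexagon_edge_below_in_arc[OF j k, of i] arc unfolding hexagon_edge_def by auto
    ultimately show "hexagon_edge i j \<in> E'"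
      unfolding hexagon_edge_def
      using subtree_of_path_contains_edge[OF distinct_hexagon_path[OF k] _ T] by blast
  qed
qed

lemma subtrees_hexagon_first_missing:
  assumes "k < 6"
  shows "{T \<in> subtrees_containing (hexagon_verts i) (hexagon_edges i) W.
            hexagon_edge i k \<notin> snd T \<and> (\<forall>j<k. hexagon_edge i j \<in> snd T)} =
         subtrees_containing (set (hexagon_path i k)) (path_edges (hexagon_path i k)) (W \<union> arc_verts i k)"
proof (intro equalityI subsetI)
  fix T assume T: "T \<in> {T \<in> subtrees_containing (hexagon_verts i) (hexagon_edges i) W.
            hexagon_edge i k \<notin> snd T \<and> (\<forall>j<k. hexagon_edge i j \<in> snd T)}"
  obtain V' E' where "T = (V', E')"
    by fastforce
  with T show "T \<in> subtrees_containing (set (hexagon_path i k)) (path_edges (hexagon_path i k)) (W \<union> arc_verts i k)"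
    using hexagon_subtree_to_path[OF assms, of i V' E'] unfolding subtrees_containing_def by simp
next
  fix T assume T: "T \<in> subtrees_containing (set (hexagon_path i k)) (path_edges (hexagon_path i k)) (W \<union> arc_verts i k)"
  obtain V' E' where "T = (V', E')"
    by fastforce
  with T show "T \<in> {T \<in> subtrees_containing (hexagon_verts i) (hexagon_edges i) W.
            hexagon_edge i k \<notin> snd T \<and> (\<forall>j<k. hexagon_edge i j \<in> snd T)}"
    using path_subtree_to_hexagon[OF assms, of i V' E'] unfolding subtrees_containing_def by simp
qed

lemma STN_containing_hexagon:
  "STN_containing (hexagon_verts i) (hexagon_edges i) W =
    (\<Sum>k<6. path_STN (hexagon_path i k) (W \<union> arc_verts i k))"
proof -
  let ?S = "subtrees_containing (hexagon_verts i) (hexagon_edges i) W"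
  define A where
    "A k = {T \<in> ?S. hexagon_edge i k \<notin> snd T \<and> (\<forall>j<k. hexagon_edge i j \<in> snd T)}" for k
  have "?S = (\<Union>k<6. A k)"
  proof (intro equalityI subsetI)
    fix T assume T: "T \<in> ?S"
    then obtain k0 where "k0 < 6" "hexagon_edge i k0 \<notin> snd T"
      unfolding subtrees_containing_def by (auto elim: hexagon_subtree_misses_edge)
    then obtain k where "k \<le> k0" "hexagon_edge i k \<notin> snd T" "\<forall>j<k. hexagon_edge i j \<in> snd T"
      using exists_least_iff[of "\<lambda>k. hexagon_edge i k \<notin> snd T"] by (metis not_le)
    then show "T \<in> (\<Union>k<6. A k)"
      using T \<open>k0 < 6\<close> unfolding A_def by auto
  qed (auto simp: A_def)
  moreover have "A k \<inter> A l = {}" if "k \<noteq> l" for k l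
    using that unfolding A_def by (cases "k < l") (auto dest: not_less_iff_gr_or_eq[THEN iffD1])
  moreover have "finite (A k)" for k
    unfolding A_def by (simp add: finite_subtrees_containing hexagon_verts_def hexagon_edges_def)
  ultimately have "card ?S = (\<Sum>k<6. card (A k))"
    by (simp add: card_UN_disjoint)
  also have "\<dots> = (\<Sum>k<6. path_STN (hexagon_path i k) (W \<union> arc_verts i k))"
    unfolding A_def path_STN_def STN_containing_def
    by (rule sum.cong) (simp_all add: subtrees_hexagon_first_missing)
  finally show ?thesis
    unfolding STN_containing_def .
qed


lemmas hexagon_evaluation = STN_containing_hexagon lessThan_nat_numeral hexagon_path_def upt_rec
  arc_verts_def atLeastAtMost_upt path_STN_Cons path_STN_singleton insert_Diff_if numeral_2_eq_2[symmetric]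

lemma STN_hexagon: "STN_containing (hexagon_verts i) (hexagon_edges i) {} = 36"
  by (simp add: hexagon_evaluation)

lemma STN_hexagon_vertex:
  "v < 6 \<Longrightarrow> STN_containing (hexagon_verts i) (hexagon_edges i) {(i, v)} = 21"
  by (drule less_6_cases) (elim disjE; simp add: hexagon_evaluation)

lemma STN_hexagon_two_vertices:
  "STN_containing (hexagon_verts i) (hexagon_edges i) {(i, 0), (i, 1)} = 16"
  "STN_containing (hexagon_verts i) (hexagon_edges i) {(i, 0), (i, 2)} = 13"
  "STN_containing (hexagon_verts i) (hexagon_edges i) {(i, 0), (i, 3)} = 12"
  by (simp_all add: hexagon_evaluation)

section \<open>Polyphenylene chains\<close>

lemma pp_verts_Suc: "pp_verts (Suc n) = pp_verts n \<union> hexagon_verts n"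
  unfolding pp_verts_def hexagon_verts_def by auto

lemma hex_edges_Suc: "hex_edges (Suc n) = hex_edges n \<union> hexagon_edges n"
  unfolding hex_edges_def hexagon_edges_def hexagon_edge_def by (auto simp: less_Suc_eq) blast

lemma pp_edges_Suc:
  "0 < n \<Longrightarrow> pp_edges (Suc n) ds =
    pp_edges n ds \<union> hexagon_edges n \<union> {{(n - 1, out_vertex ds (n - 1)), (n, 0)}}"
  unfolding pp_edges_def cut_edges_def hex_edges_Suc by (auto simp: less_Suc_eq)

lemma out_vertex_append: "i \<le> length ds \<Longrightarrow> out_vertex (ds @ ds') i = out_vertex ds i"
  unfolding out_vertex_def by (auto simp: nth_append)

lemma pp_edges_append:
  assumes "n \<le> length ds + 2"
  shows "pp_edges n (ds @ ds') = pp_edges n ds"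
proof -
  have "out_vertex (ds @ ds') i = out_vertex ds i" if "Suc i < n" for i
    using that assms by (simp add: out_vertex_append)
  then have "cut_edges n (ds @ ds') = cut_edges n ds"
    unfolding cut_edges_def by fastforce
  then show ?thesis
    unfolding pp_edges_def by simp
qed

lemma pp_one: "pp_verts 1 = hexagon_verts 0" "pp_edges 1 ds = hexagon_edges 0"
  using pp_verts_Suc[of 0] hex_edges_Suc[of 0]
  unfolding pp_edges_def by (simp_all add: pp_verts_def hex_edges_def cut_edges_def)

lemma out_vertex_less_6:
  "\<forall>x\<in>set ds. x < 6 \<Longrightarrow> i \<le> length ds \<Longrightarrow> out_vertex ds i < 6"
  unfolding out_vertex_def by auto

lemma pp_edges_subset:
  assumes "\<forall>x\<in>set ds. x < 6" "n \<le> length ds + 2" "e \<in> pp_edges n ds"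
  shows "e \<subseteq> pp_verts n"
  using assms out_vertex_less_6[OF assms(1)]
  unfolding pp_edges_def hex_edges_def cut_edges_def pp_verts_def by fastforce

lemma finite_pp_edges: "finite (pp_edges n ds)"
proof -
  have "hex_edges n = (\<lambda>(i, j). {(i, j), (i, (j + 1) mod 6)}) ` ({0..<n} \<times> {0..<6})"
    unfolding hex_edges_def by auto blast
  moreover have "cut_edges n ds = (\<lambda>i. {(i, out_vertex ds i), (Suc i, 0)}) ` {..<n - 1}"
    unfolding cut_edges_def by auto
  ultimately show ?thesis
    unfolding pp_edges_def by simp
qed

lemma bridged_graphs_pp_hexagon:
  assumes "0 < n" "n \<le> length ds + 1" "\<forall>x\<in>set ds. x < 6"
  shows "bridged_graphs (pp_verts n) (hexagon_verts n) (pp_edges n ds) (hexagon_edges n)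
    (n - 1, out_vertex ds (n - 1)) (n, 0)"
proof unfold_locales
  show "\<forall>e\<in>pp_edges n ds. e \<subseteq> pp_verts n"
    using pp_edges_subset[OF assms(3)] assms(2) by auto
  show "(n - 1, out_vertex ds (n - 1)) \<in> pp_verts n"
    using out_vertex_less_6[OF assms(3), of "n - 1"] assms(1,2) unfolding pp_verts_def by auto
qed (auto simp: pp_verts_def hexagon_verts_def hexagon_edges_def hexagon_edge_def pp_edges_def
       hex_edges_def cut_edges_def)

lemma finite_pp_hexagon:
  "finite (pp_verts n)" "finite (pp_edges n ds)" "finite (hexagon_verts i)" "finite (hexagon_edges i)"
  by (simp_all add: finite_pp_edges pp_verts_def hexagon_verts_def hexagon_edges_def)

lemma STN_pp_Suc:
  assumes "0 < n" "n \<le> length ds + 1" "\<forall>x\<in>set ds. x < 6"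
  shows "STN (pp_verts (Suc n)) (pp_edges (Suc n) ds) =
    STN (pp_verts n) (pp_edges n ds) + 36 +
    21 * STN_containing (pp_verts n) (pp_edges n ds) {(n - 1, out_vertex ds (n - 1))}"
proof -
  interpret bridged_graphs "pp_verts n" "hexagon_verts n" "pp_edges n ds" "hexagon_edges n"
    "(n - 1, out_vertex ds (n - 1))" "(n, 0)"
    using assms by (rule bridged_graphs_pp_hexagon)
  have "STN (pp_verts (Suc n)) (pp_edges (Suc n) ds) = STN_containing V E {}"
    unfolding STN_eq_STN_containing pp_verts_Suc pp_edges_Suc[OF assms(1)] ..
  also have "\<dots> = STN (pp_verts n) (pp_edges n ds) + STN_containing (hexagon_verts n) (hexagon_edges n) {} +
      STN_containing (pp_verts n) (pp_edges n ds) {(n - 1, out_vertex ds (n - 1))} *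
      STN_containing (hexagon_verts n) (hexagon_edges n) {(n, 0)}"
    using STN_containing_bridge[OF finite_pp_hexagon(1,3,2,4), of "{}"]
    by (simp add: STN_eq_STN_containing)
  finally show ?thesis
    by (simp add: STN_hexagon STN_hexagon_vertex)
qed

lemma STN_containing_pp_Suc_last:
  assumes "0 < n" "n \<le> length ds + 1" "\<forall>x\<in>set ds. x < 6" "v < 6"
  shows "STN_containing (pp_verts (Suc n)) (pp_edges (Suc n) ds) {(n, v)} =
    21 + STN_containing (pp_verts n) (pp_edges n ds) {(n - 1, out_vertex ds (n - 1))} *
         STN_containing (hexagon_verts n) (hexagon_edges n) {(n, 0), (n, v)}"
proof -
  interpret bridged_graphs "pp_verts n" "hexagon_verts n" "pp_edges n ds" "hexagon_edges n"
    "(n - 1, out_vertex ds (n - 1))" "(n, 0)"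
    using assms(1-3) by (rule bridged_graphs_pp_hexagon)
  have v: "(n, v) \<notin> pp_verts n" "(n, v) \<in> hexagon_verts n"
    using assms(4) unfolding pp_verts_def hexagon_verts_def by auto
  have "STN_containing (pp_verts (Suc n)) (pp_edges (Suc n) ds) {(n, v)} = STN_containing V E {(n, v)}"
    unfolding pp_verts_Suc pp_edges_Suc[OF assms(1)] ..
  also have "\<dots> = STN_containing (pp_verts n) (pp_edges n ds) {(n, v)} +
      STN_containing (hexagon_verts n) (hexagon_edges n) {(n, v)} +
      STN_containing (pp_verts n) (pp_edges n ds) {(n - 1, out_vertex ds (n - 1))} *
      STN_containing (hexagon_verts n) (hexagon_edges n) {(n, 0), (n, v)}"
    using STN_containing_bridge[OF finite_pp_hexagon(1,3,2,4), of "{(n, v)}"] v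
    by (simp add: insert_commute insert_Diff_if)
  finally show ?thesis
    using v by (simp add: STN_hexagon_vertex assms(4) STN_containing_eq_0)
qed

definition STN_last :: "nat \<Rightarrow> nat list \<Rightarrow> nat \<Rightarrow> nat" where
  "STN_last n ds v = STN_containing (pp_verts n) (pp_edges n ds) {(n - 1, v)}"

lemma STN_hexagon_pairs_sum:
  "(\<Sum>v\<in>{1, 2, 3}. STN_containing (hexagon_verts i) (hexagon_edges i) {(i, 0), (i, v)}) = 41"
proof -
  have "(\<Sum>v\<in>{1, 2, 3}. g v) = g 1 + g 2 + (g 3 :: nat)" for g :: "nat \<Rightarrow> nat"
    by simp
  then show ?thesis
    by (simp only: STN_hexagon_two_vertices)
qed

lemma STN_snoc:
  assumes "length ds = m" "set ds \<subseteq> {1, 2, 3}" "d \<in> {1, 2, 3}"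
  shows "STN (pp_verts (m + 3)) (pp_edges (m + 3) (ds @ [d])) =
    STN (pp_verts (m + 2)) (pp_edges (m + 2) ds) + 36 + 21 * STN_last (m + 2) ds d"
proof -
  have "STN (pp_verts (Suc (m + 2))) (pp_edges (Suc (m + 2)) (ds @ [d])) =
      STN (pp_verts (m + 2)) (pp_edges (m + 2) (ds @ [d])) + 36 +
      21 * STN_containing (pp_verts (m + 2)) (pp_edges (m + 2) (ds @ [d]))
        {(m + 2 - 1, out_vertex (ds @ [d]) (m + 2 - 1))}"
    by (rule STN_pp_Suc) (use assms in auto)
  moreover have "m + 2 - 1 = m + 1" "out_vertex (ds @ [d]) (m + 1) = d"
    "pp_edges (m + 2) (ds @ [d]) = pp_edges (m + 2) ds" "Suc (m + 2) = m + 3"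
    using assms(1) by (simp_all add: out_vertex_def nth_append pp_edges_append)
  ultimately show ?thesis
    unfolding STN_last_def by (simp only:)
qed

lemma STN_last_snoc:
  assumes "length ds = m" "set ds \<subseteq> {1, 2, 3}" "d \<in> {1, 2, 3}" "v \<in> {1, 2, 3}"
  shows "STN_last (m + 3) (ds @ [d]) v =
    21 + STN_last (m + 2) ds d *
      STN_containing (hexagon_verts (m + 2)) (hexagon_edges (m + 2)) {(m + 2, 0), (m + 2, v)}"
proof -
  have "STN_containing (pp_verts (Suc (m + 2))) (pp_edges (Suc (m + 2)) (ds @ [d])) {(m + 2, v)} =
      21 + STN_containing (pp_verts (m + 2)) (pp_edges (m + 2) (ds @ [d]))
        {(m + 2 - 1, out_vertex (ds @ [d]) (m + 2 - 1))} *
      STN_containing (hexagon_verts (m + 2)) (hexagon_edges (m + 2)) {(m + 2, 0), (m + 2, v)}"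
    by (rule STN_containing_pp_Suc_last) (use assms in auto)
  moreover have "m + 2 - 1 = m + 1" "out_vertex (ds @ [d]) (m + 1) = d"
    "pp_edges (m + 2) (ds @ [d]) = pp_edges (m + 2) ds" "Suc (m + 2) = m + 3" "m + 3 - 1 = m + 2"
    using assms(1) by (simp_all add: out_vertex_def nth_append pp_edges_append)
  ultimately show ?thesis
    unfolding STN_last_def by (simp only:)
qed

lemma STN_one_hexagon: "STN (pp_verts 1) (pp_edges 1 ds) = 36"
  unfolding pp_one STN_eq_STN_containing by (rule STN_hexagon)

lemma STN_two_hexagons: "STN (pp_verts 2) (pp_edges 2 []) = 513"
proof -
  have "STN (pp_verts (Suc 1)) (pp_edges (Suc 1) []) =
      STN (pp_verts 1) (pp_edges 1 []) + 36 +
      21 * STN_containing (pp_verts 1) (pp_edges 1 []) {(1 - 1, out_vertex [] (1 - 1))}"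
    by (rule STN_pp_Suc) auto
  moreover have "STN_containing (pp_verts 1) (pp_edges 1 []) {(0, 0)} = 21"
    unfolding pp_one by (rule STN_hexagon_vertex) simp
  ultimately show ?thesis
    using STN_one_hexagon[of "[]"] by (simp add: out_vertex_def numeral_2_eq_2)
qed

lemma STN_last_two_hexagons:
  assumes "v \<in> {1, 2, 3}"
  shows "STN_last 2 [] v = 21 + 21 * STN_containing (hexagon_verts 1) (hexagon_edges 1) {(1, 0), (1, v)}"
proof -
  have "STN_containing (pp_verts (Suc 1)) (pp_edges (Suc 1) []) {(1, v)} =
      21 + STN_containing (pp_verts 1) (pp_edges 1 []) {(1 - 1, out_vertex [] (1 - 1))} *
      STN_containing (hexagon_verts 1) (hexagon_edges 1) {(1, 0), (1, v)}"
    by (rule STN_containing_pp_Suc_last) (use assms in auto)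
  moreover have "STN_containing (pp_verts 1) (pp_edges 1 []) {(0, 0)} = 21"
    unfolding pp_one by (rule STN_hexagon_vertex) simp
  ultimately show ?thesis
    unfolding STN_last_def by (simp add: out_vertex_def numeral_2_eq_2)
qed

section \<open>Averaging over attachment sequences\<close>

lemma pp_choices_Suc:
  "pp_choices (m + 3) = (\<lambda>(ds, d). ds @ [d]) ` (pp_choices (m + 2) \<times> {1, 2, 3})"
proof (intro equalityI subsetI)
  fix xs assume "xs \<in> pp_choices (m + 3)"
  then have xs: "length xs = Suc m" "set xs \<subseteq> {1, 2, 3}"
    unfolding pp_choices_def by auto
  then have "xs \<noteq> []"
    by auto
  then have "last xs \<in> set xs"
    by (rule last_in_set)
  then have "last xs \<in> {1, 2, 3}"
    using xs(2) by (rule rev_subsetD)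
  moreover have "set (butlast xs) \<subseteq> {1, 2, 3}"
    using xs(2) by (meson in_set_butlastD subset_iff)
  ultimately have "(butlast xs, last xs) \<in> pp_choices (m + 2) \<times> {1, 2, 3}"
    using xs(1) unfolding pp_choices_def by simp
  then show "xs \<in> (\<lambda>(ds, d). ds @ [d]) ` (pp_choices (m + 2) \<times> {1, 2, 3})"
    by (rule image_eqI[rotated]) (use \<open>xs \<noteq> []\<close> in simp)
next
  fix xs assume "xs \<in> (\<lambda>(ds, d). ds @ [d]) ` (pp_choices (m + 2) \<times> {1, 2, 3})"
  then obtain p where "xs = (\<lambda>(ds, d). ds @ [d]) p" "p \<in> pp_choices (m + 2) \<times> {1, 2, 3}"
    by (rule imageE)
  then show "xs \<in> pp_choices (m + 3)"
    unfolding pp_choices_def by (cases p) simp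
qed

lemma sum_pp_choices_Suc:
  "(\<Sum>xs\<in>pp_choices (m + 3). f xs) = (\<Sum>ds\<in>pp_choices (m + 2). \<Sum>d\<in>{1, 2, 3}. f (ds @ [d]))"
proof -
  have "inj_on (\<lambda>(ds, d). ds @ [d]) (pp_choices (m + 2) \<times> {1, 2, 3})"
    by (rule inj_onI) auto
  then have "(\<Sum>xs\<in>pp_choices (m + 3). f xs) = (\<Sum>(ds, d)\<in>pp_choices (m + 2) \<times> {1, 2, 3}. f (ds @ [d]))"
    unfolding pp_choices_Suc by (subst sum.reindex) (auto intro: sum.cong)
  then show ?thesis
    by (simp only: sum.cartesian_product)
qed

lemma card_pp_choices: "card (pp_choices (m + 2)) = 3 ^ m"
proof (induction m)
  case 0
  have "pp_choices (0 + 2) = {[]}"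
    unfolding pp_choices_def by auto
  then show ?case
    by simp
next
  case (Suc m)
  have "card (pp_choices (m + 3)) = (\<Sum>ds\<in>pp_choices (m + 2). \<Sum>d\<in>{1, 2, 3 :: nat}. 1)"
    using sum_pp_choices_Suc[where f = "\<lambda>_. 1 :: nat"] by (simp only: card_eq_sum)
  also have "\<dots> = 3 ^ Suc m"
    using Suc by simp
  finally show ?case
    by (simp add: eval_nat_numeral)
qed

definition STN_total :: "nat \<Rightarrow> nat" where
  "STN_total m = (\<Sum>ds\<in>pp_choices (m + 2). STN (pp_verts (m + 2)) (pp_edges (m + 2) ds))"

definition STN_last_total :: "nat \<Rightarrow> nat" where
  "STN_last_total m = (\<Sum>ds\<in>pp_choices (m + 2). \<Sum>d\<in>{1, 2, 3}. STN_last (m + 2) ds d)"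

lemma Suc_plus_2: "Suc m + 2 = m + 3"
  by simp

lemma pp_choicesD: "ds \<in> pp_choices (m + 2) \<Longrightarrow> length ds = m \<and> set ds \<subseteq> {1, 2, 3}"
  unfolding pp_choices_def by simp

lemma STN_total_Suc: "STN_total (Suc m) = 3 * STN_total m + 108 * 3 ^ m + 21 * STN_last_total m"
proof -
  have "STN_total (Suc m) =
      (\<Sum>ds\<in>pp_choices (m + 2). \<Sum>d\<in>{1, 2, 3}. STN (pp_verts (m + 3)) (pp_edges (m + 3) (ds @ [d])))"
    unfolding STN_total_def Suc_plus_2 by (rule sum_pp_choices_Suc)
  also have "\<dots> = (\<Sum>ds\<in>pp_choices (m + 2). \<Sum>d\<in>{1, 2, 3}.
      STN (pp_verts (m + 2)) (pp_edges (m + 2) ds) + 36 + 21 * STN_last (m + 2) ds d)"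
  proof (intro sum.cong refl)
    fix ds d assume "ds \<in> pp_choices (m + 2)" "d \<in> {1, 2, 3 :: nat}"
    then show "STN (pp_verts (m + 3)) (pp_edges (m + 3) (ds @ [d])) =
        STN (pp_verts (m + 2)) (pp_edges (m + 2) ds) + 36 + 21 * STN_last (m + 2) ds d"
      using pp_choicesD by (intro STN_snoc) auto
  qed
  also have "\<dots> = 3 * STN_total m + 108 * 3 ^ m + 21 * STN_last_total m"
    using card_pp_choices[of m]
    by (simp add: STN_total_def STN_last_total_def sum.distrib sum_distrib_left)
  finally show ?thesis .
qed

lemma STN_last_total_Suc: "STN_last_total (Suc m) = 189 * 3 ^ m + 41 * STN_last_total m"
proof -
  let ?pair = "\<lambda>v. STN_containing (hexagon_verts (m + 2)) (hexagon_edges (m + 2)) {(m + 2, 0), (m + 2, v)}"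
  have "STN_last_total (Suc m) =
      (\<Sum>ds\<in>pp_choices (m + 2). \<Sum>d\<in>{1, 2, 3}. \<Sum>v\<in>{1, 2, 3}. STN_last (m + 3) (ds @ [d]) v)"
    unfolding STN_last_total_def Suc_plus_2 by (rule sum_pp_choices_Suc)
  also have "\<dots> = (\<Sum>ds\<in>pp_choices (m + 2). \<Sum>d\<in>{1, 2, 3}. \<Sum>v\<in>{1, 2, 3}.
      21 + STN_last (m + 2) ds d * ?pair v)"
  proof (intro sum.cong refl)
    fix ds d v assume "ds \<in> pp_choices (m + 2)" "d \<in> {1, 2, 3 :: nat}" "v \<in> {1, 2, 3 :: nat}"
    then show "STN_last (m + 3) (ds @ [d]) v = 21 + STN_last (m + 2) ds d * ?pair v"
      using pp_choicesD by (intro STN_last_snoc) auto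
  qed
  also have "\<dots> = (\<Sum>ds\<in>pp_choices (m + 2). \<Sum>d\<in>{1, 2, 3}. 63 + 41 * STN_last (m + 2) ds d)"
  proof -
    have "(\<Sum>v\<in>{1, 2, 3}. 21 + x * ?pair v) = 63 + 41 * x" for x
      using STN_hexagon_pairs_sum[of "m + 2"] by (simp add: sum.distrib sum_distrib_left[symmetric])
    then show ?thesis
      by (simp only:)
  qed
  also have "\<dots> = 189 * 3 ^ m + 41 * STN_last_total m"
    using card_pp_choices[of m]
    by (simp add: STN_last_total_def sum.distrib sum_distrib_left[symmetric])
  finally show ?thesis .
qed

lemma STN_total_0: "STN_total 0 = 513"
  and STN_last_total_0: "STN_last_total 0 = 924"
proof -
  have choices: "pp_choices 2 = {[]}" and two: "0 + 2 = (2 :: nat)"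
    unfolding pp_choices_def by auto
  have "(\<Sum>v\<in>{1, 2, 3}. STN_last 2 [] v) = (\<Sum>v\<in>{1, 2, 3}. 21 + 21 *
      STN_containing (hexagon_verts 1) (hexagon_edges 1) {(1, 0), (1, v)})"
    by (intro sum.cong refl) (rule STN_last_two_hexagons)
  also have "\<dots> = 924"
    using STN_hexagon_pairs_sum[of 1] by (simp add: sum.distrib sum_distrib_left[symmetric])
  finally show "STN_last_total 0 = 924"
    unfolding STN_last_total_def choices two by simp
  show "STN_total 0 = 513"
    unfolding STN_total_def choices two using STN_two_hexagons by simp
qed

lemma STN_totals_closed_form:
  "real (STN_total m) = 3 ^ m * (3969 / 1444 * (41 / 3) ^ (m + 2) + 45 / 38 * real (m + 2) - 3969 / 1444) \<and>
   real (STN_last_total m) = 63 / 38 * 3 ^ (m + 1) * ((41 / 3) ^ (m + 2) - 1)"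
proof (induction m)
  case 0
  show ?case
    using STN_total_0 STN_last_total_0 by (simp add: power2_eq_square)
next
  case (Suc m)
  define x :: real where "x = (41 / 3) ^ (m + 2)"
  have x_Suc: "(41 / 3) ^ (Suc m + 2) = 41 / 3 * x"
    unfolding x_def by simp
  have IH: "real (STN_total m) = 3 ^ m * (3969 / 1444 * x + 45 / 38 * (real m + 2) - 3969 / 1444)"
    "real (STN_last_total m) = 63 / 38 * (3 * 3 ^ m) * (x - 1)"
    using Suc.IH unfolding x_def by simp_all
  show ?case
    unfolding x_Suc STN_total_Suc STN_last_total_Suc of_nat_add of_nat_mult IH
    by (simp add: field_simps)
qed

theorem theorem7:
  fixes n :: nat
  assumes "n \<ge> 1"
  shows "STN_avr n = 3969 / 1444 * (41 / 3) ^ n + 45 / 38 * real n - 3969 / 1444"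
proof (cases "n = 1")
  case True
  have "pp_choices 1 = {[]}"
    unfolding pp_choices_def by auto
  then show ?thesis
    using STN_one_hexagon[of "[]"] unfolding STN_avr_def True by simp
next
  case False
  define m where "m = n - 2"
  have n: "n = m + 2"
    using assms False unfolding m_def by simp
  have "STN_avr n = real (STN_total m) / 3 ^ m"
    unfolding STN_avr_def STN_total_def n card_pp_choices by simp
  then show ?thesis
    using STN_totals_closed_form[of m] unfolding n by simp
qed

end
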